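(* Let $M$ be a finite-dimensional real vector space and $n\geq 1$. Let $\mathbb{T}^n$ be the $n$-torus (a product of $n$ circles) with coordinates $x_1,\dots,x_n$, coordinate vector fields $\partial_i=\partial_{x_i}$ and volume form $dV=dx_1\wedge\cdots\wedge dx_n$. Let $\Omega=\sum_{i=1}^n\omega_i\otimes\partial_i$ be a polysymplectic form on $M$, where $\omega_1,\dots,\omega_n$ are closed $2$-forms on $M$, and let $S:M\to\mathbb{R}$ be smooth. Choose $1$-forms $\theta_i$ on $M$ with $d\theta_i=\omega_i$, set \[ \widetilde{\Theta}=\sum_{i=1}^n(-1)^{i+1}\theta_i\wedge dx_1\wedge\cdots\wedge\widehat{dx_i}\wedge\cdots\wedge dx_n \] as an $n$-form on $\mathbb{T}^n\times M$, and define $\mathcal{A}^\Omega_S:C^\infty(\mathbb{T}^n,M)\to\mathbb{R}$ by \[ \mathcal{A}^\Omega_S(Z)=\int_{\mathbb{T}^n}Z^*\widetilde{\Theta}-\int_{\mathbb{T}^n}S(Z(\vec{x}))\,dV, \] where $Z$ is regarded as the section $\vec{x}\mapsto(\vec{x},Z(\vec{x}))$ of $\mathbb{T}^n\times M\to\mathbb{T}^n$. Then $Z\in C^\infty(\mathbb{T}^n,M)$ is a critical point of $\mathcal{A}^\Omega_S$ if and only if \[ (dS)_{Z(\vec{x})}=\Omega^\sharp((dZ)_{\vec{x}})\quad\text{for all }\vec{x}\in\mathbb{T}^n. \]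
   Context: An $\mathbb{R}^n$-valued form $\Omega$ on $M$ is non-degenerate if $\Omega(V,\cdot)=0$ implies $V=0$; an $\mathbb{R}^n$-valued $2$-form is polysymplectic if it is closed and non-degenerate. Here $\mathbb{R}^n$ is identified with the span of $\partial_1,\dots,\partial_n$. For a linear map $X:\mathbb{R}^n\to TM$, $\Omega^\sharp(X)\in T^*M$ is defined by $\Omega^\sharp(X)(V)=\operatorname{tr}\big(\nu\mapsto\Omega(V,X(\nu))\big)$, the trace of the linear endomorphism $\nu\mapsto\Omega(V,X(\nu))$ of $\mathbb{R}^n$. For $Z:\mathbb{T}^n\to M$, $(dZ)_{\vec{x}}$ is regarded as a linear map $\mathbb{R}^n\to TM$. *)

theory Defs
  imports "HOL-Analysis.Analysis"
begin

fun Ck :: "nat \<Rightarrow> ('a::euclidean_space \<Rightarrow> 'b::real_normed_vector) \<Rightarrow> bool" where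
  "Ck 0 f = continuous_on UNIV f"
| "Ck (Suc k) f = (\<exists>f'. (\<forall>x. (f has_derivative f' x) (at x)) \<and> (\<forall>v. Ck k (\<lambda>x. f' x v)))"

definition smooth :: "('a::euclidean_space \<Rightarrow> 'b::real_normed_vector) \<Rightarrow> bool" where
  "smooth f \<longleftrightarrow> (\<forall>k. Ck k f)"

definition D :: "('a::real_normed_vector \<Rightarrow> 'b::real_normed_vector) \<Rightarrow> 'a \<Rightarrow> 'a \<Rightarrow> 'b" where
  "D f p v = frechet_derivative f (at p) v"

text \<open>A 1-form: p \<mapsto> linear functional on T_pM = M. A 2-form: p \<mapsto> alternating bilinear form.\<close>

definition smooth_1form :: "('m::euclidean_space \<Rightarrow> 'm \<Rightarrow> real) \<Rightarrow> bool" where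
  "smooth_1form \<theta> \<longleftrightarrow> (\<forall>p. linear (\<theta> p)) \<and> (\<forall>V. smooth (\<lambda>p. \<theta> p V))"

definition smooth_2form :: "('m::euclidean_space \<Rightarrow> 'm \<Rightarrow> 'm \<Rightarrow> real) \<Rightarrow> bool" where
  "smooth_2form \<omega> \<longleftrightarrow> (\<forall>p. bilinear (\<omega> p) \<and> (\<forall>V W. \<omega> p V W = - \<omega> p W V))
      \<and> (\<forall>V W. smooth (\<lambda>p. \<omega> p V W))"

text \<open>Exterior derivatives, evaluated on constant vector fields.\<close>
definition d1 :: "('m::euclidean_space \<Rightarrow> 'm \<Rightarrow> real) \<Rightarrow> 'm \<Rightarrow> 'm \<Rightarrow> 'm \<Rightarrow> real" where
  "d1 \<theta> p V W = D (\<lambda>q. \<theta> q W) p V - D (\<lambda>q. \<theta> q V) p W"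

definition d2 :: "('m::euclidean_space \<Rightarrow> 'm \<Rightarrow> 'm \<Rightarrow> real) \<Rightarrow> 'm \<Rightarrow> 'm \<Rightarrow> 'm \<Rightarrow> 'm \<Rightarrow> real" where
  "d2 \<omega> p U V W = D (\<lambda>q. \<omega> q V W) p U - D (\<lambda>q. \<omega> q U W) p V + D (\<lambda>q. \<omega> q U V) p W"

definition closed_2form :: "('m::euclidean_space \<Rightarrow> 'm \<Rightarrow> 'm \<Rightarrow> real) \<Rightarrow> bool" where
  "closed_2form \<omega> \<longleftrightarrow> smooth_2form \<omega> \<and> (\<forall>p U V W. d2 \<omega> p U V W = 0)"

text \<open>R^n-valued 2-form Omega = sum_i omega_i \<otimes> \<partial>_i, with R^n = real^'n and \<partial>_i = axis i 1.\<close>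
definition Omega_of :: "('n::finite \<Rightarrow> 'm \<Rightarrow> 'm \<Rightarrow> 'm \<Rightarrow> real) \<Rightarrow> 'm \<Rightarrow> 'm \<Rightarrow> 'm \<Rightarrow> real^'n" where
  "Omega_of \<omega> p V W = (\<chi> i. \<omega> i p V W)"

definition nondegenerate :: "('m::real_vector \<Rightarrow> 'm \<Rightarrow> 'm \<Rightarrow> real^'n::finite) \<Rightarrow> bool" where
  "nondegenerate \<Omega> \<longleftrightarrow> (\<forall>p V. (\<forall>W. \<Omega> p V W = 0) \<longrightarrow> V = 0)"

definition polysymplectic :: "('n::finite \<Rightarrow> 'm::euclidean_space \<Rightarrow> 'm \<Rightarrow> 'm \<Rightarrow> real) \<Rightarrow> bool" where
  "polysymplectic \<omega> \<longleftrightarrow> (\<forall>i. closed_2form (\<omega> i)) \<and> nondegenerate (Omega_of \<omega>)"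

definition Omega_sharp :: "('m \<Rightarrow> 'm \<Rightarrow> real^'n::finite) \<Rightarrow> (real^'n \<Rightarrow> 'm) \<Rightarrow> 'm \<Rightarrow> real" where
  "Omega_sharp \<Omega>p X V = trace (matrix (\<lambda>\<nu>. \<Omega>p V (X \<nu>)))"

definition torus_periodic :: "(real^'n::finite \<Rightarrow> 'b) \<Rightarrow> bool" where
  "torus_periodic Z \<longleftrightarrow> (\<forall>x i. Z (x + axis i 1) = Z x)"

definition torus_smooth_map :: "(real^'n::finite \<Rightarrow> 'm::euclidean_space) \<Rightarrow> bool" where
  "torus_smooth_map Z \<longleftrightarrow> smooth Z \<and> torus_periodic Z"

text \<open>With Theta~ = sum_i (-1)^(i+1) theta_i \<and> dx_1 \<and> .. ^dx_i .. \<and> dx_n, the pull-back along the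
  section x \<mapsto> (x, Z x) is Z^*Theta~ = (sum_i theta_i(Z x)(\<partial>_i Z(x))) dV.  The torus is the unit cube
  [0,1]^n with opposite faces identified, dV = Lebesgue measure.\<close>
definition action :: "('n::finite \<Rightarrow> 'm::euclidean_space \<Rightarrow> 'm \<Rightarrow> real) \<Rightarrow> ('m \<Rightarrow> real)
    \<Rightarrow> (real^'n \<Rightarrow> 'm) \<Rightarrow> real" where
  "action \<theta> S Z = integral (cbox 0 One) (\<lambda>x. (\<Sum>i\<in>UNIV. \<theta> i (Z x) (D Z x (axis i 1))))
                  - integral (cbox 0 One) (\<lambda>x. S (Z x))"

text \<open>Critical point: the first variation vanishes in every direction Y \<in> C^infinity(T^n, M)
  (the tangent space of the vector space C^infinity(T^n,M) at Z).\<close>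
definition critical_point :: "((real^'n::finite \<Rightarrow> 'm::euclidean_space) \<Rightarrow> real) \<Rightarrow> (real^'n \<Rightarrow> 'm) \<Rightarrow> bool" where
  "critical_point A Z \<longleftrightarrow>
     (\<forall>Y. torus_smooth_map Y \<longrightarrow> ((\<lambda>t. A (\<lambda>x. Z x + t *\<^sub>R Y x)) has_real_derivative 0) (at 0))"

end

(*
  Along a map Z, the integrand theta_i(Z)(d_i Z) of the action is a function of the first
  jet (Z, d_i Z), so the derivative of the action along Z + tY is the integral of the
  derivative of this jet Lagrangian in the direction of the jet of Y.  Cartan's formula
  splits the variation of theta_i(Z)(d_i Z) into omega_i(Z)(Y, d_i Z) and the total
  derivative d_i (theta_i(Z)(Y)), and a total derivative of a periodic function integrates
  to zero over the unit cube.  Hence the first variation in direction Y is the integral of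
  E(x)(Y x), where E(x) = Omega^sharp(dZ_x) - dS_(Z x).  It vanishes for all Y iff E = 0:
  testing with Y = phi V shows that x |-> E(x)(V) is L^2-orthogonal to every smooth
  periodic phi, in particular to itself.
*)

theory Submission
  imports Defs
begin

section \<open>Calculus of smooth maps\<close>

lemma Ck_Suc_imp_Ck: "Ck (Suc k) f \<Longrightarrow> Ck k f"
proof (induction k arbitrary: f)
  case 0
  then obtain f' where "\<And>x. (f has_derivative f' x) (at x)" by auto
  then show ?case
    by (metis Ck.simps(1) continuous_at_imp_continuous_on has_derivative_continuous)
next
  case (Suc k)
  then obtain f' where f': "\<And>x. (f has_derivative f' x) (at x)" "\<And>v. Ck (Suc k) (\<lambda>x. f' x v)"
    by auto
  have "Ck k (\<lambda>x. f' x v)" for v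
    using Suc.IH f'(2) .
  with f'(1) show ?case by auto
qed

lemma Ck_imp_continuous_on: "Ck k f \<Longrightarrow> continuous_on UNIV f"
proof (induction k)
  case 0
  then show ?case by simp
next
  case (Suc k)
  then show ?case using Ck_Suc_imp_Ck by blast
qed

lemma Ck_SucD:
  assumes "Ck (Suc k) f"
  shows "(f has_derivative D f x) (at x)" and "Ck k (\<lambda>x. D f x v)"
proof -
  obtain f' where f': "\<And>x. (f has_derivative f' x) (at x)" "\<And>v. Ck k (\<lambda>x. f' x v)"
    using assms by auto
  have "D f x = f' x" for x
    unfolding D_def using f'(1) by (metis frechet_derivative_at)
  with f' show "(f has_derivative D f x) (at x)" "Ck k (\<lambda>x. D f x v)" by simp_all
qed

lemma Ck_const: "Ck k (\<lambda>x. c)"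
proof (induction k arbitrary: c)
  case 0
  then show ?case by simp
next
  case (Suc k)
  have "((\<lambda>x. c) has_derivative (\<lambda>v. 0)) (at x)" for x by simp
  with Suc show ?case by (auto intro!: exI[of _ "\<lambda>x v. 0"])
qed

lemma Ck_add: "Ck k f \<Longrightarrow> Ck k g \<Longrightarrow> Ck k (\<lambda>x. f x + g x)"
proof (induction k arbitrary: f g)
  case 0
  then show ?case by (simp add: continuous_on_add)
next
  case (Suc k)
  obtain f' g' where
    f': "\<And>x. (f has_derivative f' x) (at x)" "\<And>v. Ck k (\<lambda>x. f' x v)" and
    g': "\<And>x. (g has_derivative g' x) (at x)" "\<And>v. Ck k (\<lambda>x. g' x v)"
    using Suc.prems by auto
  have "((\<lambda>x. f x + g x) has_derivative (\<lambda>v. f' x v + g' x v)) (at x)" for x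
    using f'(1) g'(1) by (rule has_derivative_add)
  moreover have "Ck k (\<lambda>x. f' x v + g' x v)" for v
    using f'(2) g'(2) by (rule Suc.IH)
  ultimately show ?case by (auto intro!: exI[of _ "\<lambda>x v. f' x v + g' x v"])
qed

lemma Ck_bounded_linear: "bounded_linear L \<Longrightarrow> Ck k f \<Longrightarrow> Ck k (\<lambda>x. L (f x))"
proof (induction k arbitrary: f)
  case 0
  then show ?case by (simp add: bounded_linear.continuous_on)
next
  case (Suc k)
  obtain f' where f': "\<And>x. (f has_derivative f' x) (at x)" "\<And>v. Ck k (\<lambda>x. f' x v)"
    using Suc.prems by auto
  have "((\<lambda>x. L (f x)) has_derivative (\<lambda>v. L (f' x v))) (at x)" for x
    using Suc.prems(1) f'(1) by (rule bounded_linear.has_derivative)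
  moreover have "Ck k (\<lambda>x. L (f' x v))" for v
    using Suc.prems(1) f'(2) by (rule Suc.IH)
  ultimately show ?case by (auto intro!: exI[of _ "\<lambda>x v. L (f' x v)"])
qed

lemma Ck_scaleR: "Ck k a \<Longrightarrow> Ck k f \<Longrightarrow> Ck k (\<lambda>x. a x *\<^sub>R f x)"
proof (induction k arbitrary: a f)
  case 0
  then show ?case by (simp add: continuous_on_scaleR)
next
  case (Suc k)
  obtain a' f' where
    a': "\<And>x. (a has_derivative a' x) (at x)" "\<And>v. Ck k (\<lambda>x. a' x v)" and
    f': "\<And>x. (f has_derivative f' x) (at x)" "\<And>v. Ck k (\<lambda>x. f' x v)"
    using Suc.prems by auto
  have "Ck k a" "Ck k f"
    using Suc.prems Ck_Suc_imp_Ck by blast+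
  have "((\<lambda>x. a x *\<^sub>R f x) has_derivative (\<lambda>v. a x *\<^sub>R f' x v + a' x v *\<^sub>R f x)) (at x)" for x
    using a'(1) f'(1) by (rule has_derivative_scaleR)
  moreover have "Ck k (\<lambda>x. a x *\<^sub>R f' x v + a' x v *\<^sub>R f x)" for v
    using Suc.IH[OF \<open>Ck k a\<close> f'(2)] Suc.IH[OF a'(2) \<open>Ck k f\<close>] by (rule Ck_add)
  ultimately show ?case by (auto intro!: exI[of _ "\<lambda>x v. a x *\<^sub>R f' x v + a' x v *\<^sub>R f x"])
qed

lemma Ck_sum: "(\<And>a. a \<in> A \<Longrightarrow> Ck k (f a)) \<Longrightarrow> Ck k (\<lambda>x. \<Sum>a\<in>A. f a x)"
proof (induction A rule: infinite_finite_induct)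
  case (insert a A)
  then show ?case by (simp add: Ck_add)
qed (simp_all add: Ck_const)

lemma linear_eq_sum_Basis:
  assumes "linear L"
  shows "L w = (\<Sum>b\<in>Basis. (w \<bullet> b) *\<^sub>R L b)"
proof -
  have "L w = L (\<Sum>b\<in>Basis. (w \<bullet> b) *\<^sub>R b)" by (simp add: euclidean_representation)
  also have "\<dots> = (\<Sum>b\<in>Basis. (w \<bullet> b) *\<^sub>R L b)"
    using assms by (simp add: linear_sum linear_scale)
  finally show ?thesis .
qed

lemma Ck_compose:
  fixes f :: "'a::euclidean_space \<Rightarrow> 'b::euclidean_space" and g :: "'b \<Rightarrow> 'c::real_normed_vector"
  shows "Ck k f \<Longrightarrow> Ck k g \<Longrightarrow> Ck k (\<lambda>x. g (f x))"
proof (induction k arbitrary: f g)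
  case 0
  then show ?case by (auto intro: continuous_on_compose2)
next
  case (Suc k)
  obtain f' g' where
    f': "\<And>x. (f has_derivative f' x) (at x)" "\<And>v. Ck k (\<lambda>x. f' x v)" and
    g': "\<And>x. (g has_derivative g' x) (at x)" "\<And>v. Ck k (\<lambda>x. g' x v)"
    using Suc.prems by auto
  have "Ck k f"
    using Suc.prems Ck_Suc_imp_Ck by blast
  have chain: "((\<lambda>x. g (f x)) has_derivative (\<lambda>v. g' (f x) (f' x v))) (at x)" for x
    using diff_chain_at[OF f'(1) g'(1)] by (simp add: o_def)
  \<comment> \<open>Expanding \<open>f' x v\<close> in the basis brings the induction hypothesis to bear on \<open>g' (f x) b\<close>.\<close>
  have "Ck k (\<lambda>x. \<Sum>b\<in>Basis. (f' x v \<bullet> b) *\<^sub>R g' (f x) b)" for v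
  proof (intro Ck_sum Ck_scaleR)
    show "Ck k (\<lambda>x. f' x v \<bullet> b)" for b
      using f'(2) by (rule Ck_bounded_linear[OF bounded_linear_inner_left])
    show "Ck k (\<lambda>x. g' (f x) b)" for b
      using Suc.IH[OF \<open>Ck k f\<close> g'(2)] .
  qed
  moreover have "g' (f x) (f' x v) = (\<Sum>b\<in>Basis. (f' x v \<bullet> b) *\<^sub>R g' (f x) b)" for x v
    using g'(1) has_derivative_linear linear_eq_sum_Basis by blast
  ultimately show ?case
    using chain by (auto intro!: exI[of _ "\<lambda>x v. g' (f x) (f' x v)"])
qed

lemma Ck_id: "Ck k (\<lambda>x. x)"
proof (cases k)
  case (Suc j)
  have "((\<lambda>x. x) has_derivative (\<lambda>v. v)) (at x)" for x by simp
  then show ?thesis using Suc by (auto intro!: exI[of _ "\<lambda>x v. v"] Ck_const)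
qed simp

lemma smooth_imp_continuous_on: "smooth f \<Longrightarrow> continuous_on UNIV f"
  unfolding smooth_def using Ck_imp_continuous_on by blast

lemma smooth_has_derivative: "smooth f \<Longrightarrow> (f has_derivative D f x) (at x)"
  unfolding smooth_def using Ck_SucD(1) by blast

lemma smooth_D: "smooth f \<Longrightarrow> smooth (\<lambda>x. D f x v)"
  unfolding smooth_def using Ck_SucD(2) by blast

lemma smooth_const: "smooth (\<lambda>x. c)"
  by (simp add: smooth_def Ck_const)

lemma smooth_add: "smooth f \<Longrightarrow> smooth g \<Longrightarrow> smooth (\<lambda>x. f x + g x)"
  by (simp add: smooth_def Ck_add)

lemma smooth_scaleR: "smooth a \<Longrightarrow> smooth f \<Longrightarrow> smooth (\<lambda>x. a x *\<^sub>R f x)"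
  by (simp add: smooth_def Ck_scaleR)

lemma smooth_mult: "smooth a \<Longrightarrow> smooth b \<Longrightarrow> smooth (\<lambda>x. a x * b x :: real)"
  using smooth_scaleR[of a b] by simp

lemma smooth_diff: "smooth f \<Longrightarrow> smooth g \<Longrightarrow> smooth (\<lambda>x. f x - g x)"
  using smooth_add[of f "\<lambda>x. (-1) *\<^sub>R g x"] smooth_scaleR[OF smooth_const, of g "-1"] by simp

lemma smooth_sum: "(\<And>a. a \<in> A \<Longrightarrow> smooth (f a)) \<Longrightarrow> smooth (\<lambda>x. \<Sum>a\<in>A. f a x)"
  by (simp add: smooth_def Ck_sum)

lemma smooth_bounded_linear: "bounded_linear L \<Longrightarrow> smooth f \<Longrightarrow> smooth (\<lambda>x. L (f x))"
  by (simp add: smooth_def Ck_bounded_linear)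

lemma smooth_linear: "bounded_linear L \<Longrightarrow> smooth L"
  using smooth_bounded_linear[of L "\<lambda>x. x"] by (simp add: smooth_def Ck_id)

lemma smooth_compose:
  fixes f :: "'a::euclidean_space \<Rightarrow> 'b::euclidean_space" and g :: "'b \<Rightarrow> 'c::real_normed_vector"
  shows "smooth f \<Longrightarrow> smooth g \<Longrightarrow> smooth (\<lambda>x. g (f x))"
  by (simp add: smooth_def Ck_compose)

lemma smooth_Pair: "smooth f \<Longrightarrow> smooth g \<Longrightarrow> smooth (\<lambda>x. (f x, g x))"
proof -
  have "bounded_linear (\<lambda>a. (a, 0))" "bounded_linear (\<lambda>b. (0, b))"
    by (simp_all add: bounded_linear_Pair bounded_linear_ident bounded_linear_zero)
  moreover assume "smooth f" "smooth g"
  ultimately have "smooth (\<lambda>x. (f x, 0) + (0, g x))"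
    by (intro smooth_add smooth_bounded_linear[of "\<lambda>a. (a, 0)"] smooth_bounded_linear[of "\<lambda>b. (0, b)"])
  then show ?thesis by simp
qed

lemma D_unique: "(f has_derivative f') (at p) \<Longrightarrow> D f p = f'"
  unfolding D_def using frechet_derivative_at by fastforce

lemma linear_D: "smooth f \<Longrightarrow> linear (D f p)"
  using smooth_has_derivative has_derivative_linear by blast

lemma D_compose:
  assumes "smooth f" "smooth g"
  shows "D (\<lambda>x. g (f x)) x v = D g (f x) (D f x v)"
proof -
  have "((\<lambda>x. g (f x)) has_derivative (\<lambda>v. D g (f x) (D f x v))) (at x)"
    using diff_chain_at[OF smooth_has_derivative[OF assms(1)] smooth_has_derivative[OF assms(2)]]
    by (simp add: o_def)
  from D_unique[OF this] show ?thesis by simp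
qed

lemma D_Pair:
  assumes "smooth f" "smooth g"
  shows "D (\<lambda>x. (f x, g x)) x v = (D f x v, D g x v)"
  using D_unique[OF has_derivative_Pair[OF smooth_has_derivative[OF assms(1)]
        smooth_has_derivative[OF assms(2)]]]
  by simp

lemma D_add_scaleR:
  assumes "smooth f" "smooth g"
  shows "D (\<lambda>x. f x + t *\<^sub>R g x) x v = D f x v + t *\<^sub>R D g x v"
  using D_unique[OF has_derivative_add[OF smooth_has_derivative[OF assms(1)]
        has_derivative_scaleR_right[OF smooth_has_derivative[OF assms(2)]]]]
  by simp

lemma torus_periodic_D:
  fixes Z :: "real^'n::finite \<Rightarrow> 'b::real_normed_vector"
  assumes "smooth Z" "torus_periodic Z"
  shows "torus_periodic (D Z)"
  unfolding torus_periodic_def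
proof (intro allI)
  fix x :: "real^'n" and i
  have "((\<lambda>y. y + axis i 1) has_derivative (\<lambda>v. v)) (at x)"
    by (auto intro!: derivative_eq_intros)
  from diff_chain_at[OF this smooth_has_derivative[OF assms(1)]]
  have "((\<lambda>y. Z (y + axis i 1)) has_derivative D Z (x + axis i 1)) (at x)"
    by (simp add: o_def)
  then show "D Z (x + axis i 1) = D Z x"
    using assms(2) by (simp add: torus_periodic_def D_unique)
qed

lemma smooth_linear_family:
  fixes F :: "'a::euclidean_space \<Rightarrow> 'b::euclidean_space \<Rightarrow> 'c::real_normed_vector"
  assumes "\<And>p. linear (F p)" and "\<And>w. smooth (\<lambda>p. F p w)"
  shows "smooth (case_prod F)"
proof -
  have "smooth (\<lambda>z. snd z \<bullet> b)" for b
    using smooth_linear[OF bounded_linear_inner_left_comp[OF bounded_linear_snd]] .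
  moreover have "smooth (\<lambda>z. F (fst z) b)" for b
    using smooth_compose[OF smooth_linear[OF bounded_linear_fst] assms(2)] .
  ultimately have "smooth (\<lambda>z. \<Sum>b\<in>Basis. (snd z \<bullet> b) *\<^sub>R F (fst z) b)"
    by (intro smooth_sum smooth_scaleR)
  moreover have "F (fst z) (snd z) = (\<Sum>b\<in>Basis. (snd z \<bullet> b) *\<^sub>R F (fst z) b)" for z
    using assms(1) by (rule linear_eq_sum_Basis)
  ultimately show ?thesis by (simp add: case_prod_beta')
qed

lemma D_linear_family:
  fixes F :: "'a::euclidean_space \<Rightarrow> 'b::euclidean_space \<Rightarrow> 'c::real_normed_vector"
  assumes "\<And>p. linear (F p)" and "\<And>w. smooth (\<lambda>p. F p w)"
  shows "D (case_prod F) (p, w) (v, u) = D (\<lambda>q. F q w) p v + F p u"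
proof -
  have expand: "F q w' = (\<Sum>b\<in>Basis. (w' \<bullet> b) *\<^sub>R F q b)" for q w'
    using assms(1) by (rule linear_eq_sum_Basis)
  have dW: "((\<lambda>z. snd z \<bullet> b) has_derivative (\<lambda>z. snd z \<bullet> b)) (at (p, w))" for b
    using bounded_linear_inner_left_comp[OF bounded_linear_snd] by (rule bounded_linear_imp_has_derivative)
  have dF: "((\<lambda>z. F (fst z) b) has_derivative (\<lambda>z. D (\<lambda>q. F q b) p (fst z))) (at (p, w))" for b
  proof -
    have "(fst has_derivative fst) (at (p, w))"
      by (rule bounded_linear_imp_has_derivative[OF bounded_linear_fst])
    moreover have "((\<lambda>q. F q b) has_derivative D (\<lambda>q. F q b) p) (at (fst (p, w)))"
      using smooth_has_derivative[OF assms(2)] by simp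
    ultimately show ?thesis
      using diff_chain_at by (fastforce simp: o_def)
  qed
  have "((\<lambda>z. \<Sum>b\<in>Basis. (snd z \<bullet> b) *\<^sub>R F (fst z) b) has_derivative
      (\<lambda>z. \<Sum>b\<in>Basis. (w \<bullet> b) *\<^sub>R D (\<lambda>q. F q b) p (fst z) + (snd z \<bullet> b) *\<^sub>R F p b)) (at (p, w))"
    using has_derivative_scaleR[OF dW dF] by (intro has_derivative_sum) simp
  then have "D (case_prod F) (p, w) (v, u) =
      (\<Sum>b\<in>Basis. (w \<bullet> b) *\<^sub>R D (\<lambda>q. F q b) p v) + (\<Sum>b\<in>Basis. (u \<bullet> b) *\<^sub>R F p b)"
    by (simp add: D_unique sum.distrib case_prod_beta' flip: expand)
  moreover have "((\<lambda>q. \<Sum>b\<in>Basis. (w \<bullet> b) *\<^sub>R F q b) has_derivative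
      (\<lambda>v. \<Sum>b\<in>Basis. (w \<bullet> b) *\<^sub>R D (\<lambda>q. F q b) p v)) (at p)"
    by (intro has_derivative_sum has_derivative_scaleR_right smooth_has_derivative assms(2))
  ultimately show ?thesis
    by (simp add: D_unique flip: expand)
qed

lemma continuous_on_D:
  assumes "smooth f" "continuous_on A P" "continuous_on A V"
  shows "continuous_on A (\<lambda>x. D f (P x) (V x))"
proof -
  have "continuous_on UNIV (case_prod (D f))"
    using smooth_linear_family[OF linear_D smooth_D, OF assms(1) assms(1)]
    by (rule smooth_imp_continuous_on)
  from continuous_on_compose2[OF this continuous_on_Pair[OF assms(2,3)]] show ?thesis
    by simp
qed

section \<open>Integrals over the unit cube\<close>

lemma continuous_on_imp_integrable_on_cbox:
  "continuous_on UNIV f \<Longrightarrow> (f::'a::euclidean_space \<Rightarrow> 'b::banach) integrable_on cbox a b"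
  by (meson continuous_on_subset integrable_continuous subset_UNIV)

lemma continuous_on_smooth_compose:
  "smooth F \<Longrightarrow> continuous_on A g \<Longrightarrow> continuous_on A (\<lambda>x. F (g x))"
  by (metis continuous_on_compose2 smooth_imp_continuous_on subset_UNIV)

lemma has_real_derivative_integral_along_line:
  fixes F :: "'b::euclidean_space \<Rightarrow> real" and P Q :: "'a::euclidean_space \<Rightarrow> 'b"
  assumes F: "smooth F" and P: "continuous_on UNIV P" and Q: "continuous_on UNIV Q"
  shows "((\<lambda>t. integral (cbox a b) (\<lambda>x. F (P x + t *\<^sub>R Q x))) has_real_derivative
      integral (cbox a b) (\<lambda>x. D F (P x) (Q x))) (at 0)"
proof -
  have deriv: "((\<lambda>t. F (P x + t *\<^sub>R Q x)) has_real_derivative D F (P x + t *\<^sub>R Q x) (Q x))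
      (at t within UNIV)" for x t
  proof (rule has_derivative_imp_has_field_derivative)
    have "((\<lambda>t. P x + t *\<^sub>R Q x) has_derivative (\<lambda>h. h *\<^sub>R Q x)) (at t)"
      by (auto intro!: derivative_eq_intros)
    from diff_chain_at[OF this smooth_has_derivative[OF F]]
    show "((\<lambda>t. F (P x + t *\<^sub>R Q x)) has_derivative (\<lambda>h. D F (P x + t *\<^sub>R Q x) (h *\<^sub>R Q x))) (at t)"
      by (simp add: o_def)
    show "h * D F (P x + t *\<^sub>R Q x) (Q x) = D F (P x + t *\<^sub>R Q x) (h *\<^sub>R Q x)" for h
      by (simp add: linear_scale[OF linear_D[OF F]])
  qed
  have integrable: "(\<lambda>x. F (P x + t *\<^sub>R Q x)) integrable_on cbox a b" for t
    by (intro continuous_on_imp_integrable_on_cbox continuous_on_smooth_compose[OF F]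
        continuous_on_add continuous_on_scaleR continuous_on_const P Q)
  have cont: "continuous_on (UNIV \<times> cbox a b) (\<lambda>(t, x). D F (P x + t *\<^sub>R Q x) (Q x))"
  proof -
    have "continuous_on (UNIV \<times> cbox a b) (\<lambda>z. P (snd z))" "continuous_on (UNIV \<times> cbox a b) (\<lambda>z. Q (snd z))"
      using continuous_on_compose2[OF P continuous_on_snd[OF continuous_on_id]]
        continuous_on_compose2[OF Q continuous_on_snd[OF continuous_on_id]]
      by simp_all
    then show ?thesis
      unfolding case_prod_beta
      by (intro continuous_on_D[OF F] continuous_on_add continuous_on_scaleR continuous_on_fst continuous_on_id)
  qed
  from leibniz_rule_field_derivative[OF deriv integrable cont, of 0] show ?thesis
    by simp
qed

lemma integral_unit_cube_translate_periodic:
  fixes u :: "'a::euclidean_space \<Rightarrow> real"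
  assumes u: "continuous_on UNIV u" and per: "\<And>x. u (x + k) = u x" and k: "k \<in> Basis"
    and s: "0 \<le> s" "s \<le> 1"
  shows "integral (cbox 0 One) (\<lambda>x. u (x + s *\<^sub>R k)) = integral (cbox 0 One) u"
proof -
  have int: "u integrable_on cbox a b" for a b
    using u by (rule continuous_on_imp_integrable_on_cbox)
  have pieces: "cbox (s *\<^sub>R k) (One + s *\<^sub>R k) \<inter> {x. x \<bullet> k \<le> 1} = cbox (s *\<^sub>R k) One"
    "cbox (s *\<^sub>R k) (One + s *\<^sub>R k) \<inter> {x. x \<bullet> k \<ge> 1} = cbox k (One + s *\<^sub>R k)"
    "cbox 0 One \<inter> {x. x \<bullet> k \<le> s} = cbox 0 (One + s *\<^sub>R k - k)"
    "cbox 0 One \<inter> {x. x \<bullet> k \<ge> s} = cbox (s *\<^sub>R k) One"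
    using k s by (auto simp: mem_box inner_add_left inner_diff_left inner_Basis split: if_splits;
        fastforce simp: inner_Basis split: if_splits)+
  have "integral (cbox 0 One) (\<lambda>x. u (x + s *\<^sub>R k)) = integral (cbox (s *\<^sub>R k) (One + s *\<^sub>R k)) u"
    using integral_shift_cbox_plus[of 0 One u "s *\<^sub>R k"] by (simp add: o_def add.commute)
  also have "\<dots> = integral (cbox (s *\<^sub>R k) One) u + integral (cbox k (One + s *\<^sub>R k)) u"
    using integral_split[OF int k, of _ _ 1] pieces(1,2) by simp
  also have "integral (cbox k (One + s *\<^sub>R k)) u = integral (cbox 0 (One + s *\<^sub>R k - k)) u"
    using integral_shift_cbox_plus[of 0 "One + s *\<^sub>R k - k" u k] per by (simp add: o_def add.commute)
  also have "integral (cbox (s *\<^sub>R k) One) u + \<dots> = integral (cbox 0 One) u"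
    using integral_split[OF int k, of 0 One s] pieces(3,4) by simp
  finally show ?thesis .
qed

lemma integral_unit_cube_D_periodic_eq_0:
  fixes u :: "'a::euclidean_space \<Rightarrow> real"
  assumes u: "smooth u" and per: "\<And>x. u (x + k) = u x" and k: "k \<in> Basis"
  shows "integral (cbox 0 One) (\<lambda>x. D u x k) = 0"
proof -
  have cu: "continuous_on UNIV u"
    using u by (rule smooth_imp_continuous_on)
  have const: "integral (cbox 0 One) (\<lambda>x. u (x + s *\<^sub>R k)) = integral (cbox 0 One) u"
    if "s \<in> {-1<..<1::real}" for s
  proof (cases "0 \<le> s")
    case True
    then show ?thesis using integral_unit_cube_translate_periodic[OF cu per k] that by simp
  next
    case False
    have "u (x + s *\<^sub>R k) = u (x + (s + 1) *\<^sub>R k)" for x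
      using per[of "x + s *\<^sub>R k"] by (simp add: algebra_simps)
    then show ?thesis
      using integral_unit_cube_translate_periodic[OF cu per k, of "s + 1"] that False by simp
  qed
  have "((\<lambda>s. integral (cbox 0 One) (\<lambda>x. u (x + s *\<^sub>R k))) has_real_derivative
      integral (cbox 0 One) (\<lambda>x. D u x k)) (at 0)"
    using has_real_derivative_integral_along_line[OF u continuous_on_id continuous_on_const] .
  then have "((\<lambda>s. integral (cbox 0 One) u) has_real_derivative integral (cbox 0 One) (\<lambda>x. D u x k)) (at 0)"
    by (rule has_field_derivative_transform_within_open[OF _ open_greaterThanLessThan _ const]) auto
  then show ?thesis
    using DERIV_const DERIV_unique by blast
qed

lemma torus_periodic_integer_translate:
  assumes "torus_periodic f"
  shows "f (x + (\<Sum>i\<in>I. of_int (m i) *\<^sub>R axis i 1)) = f x"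
proof (induction I arbitrary: x rule: infinite_finite_induct)
  case (insert j I)
  have per: "f (y + axis j 1) = f y" for y
    using assms by (simp add: torus_periodic_def)
  have shift: "f (y + of_int z *\<^sub>R axis j 1) = f y" for y z
  proof (induction z arbitrary: y rule: int_induct[of _ 0])
    case (step1 z)
    have "f (y + of_int (z + 1) *\<^sub>R axis j 1) = f (y + of_int z *\<^sub>R axis j 1 + axis j 1)"
      by (simp add: algebra_simps)
    with per step1.IH show ?case by simp
  next
    case (step2 z)
    have "f (y + of_int z *\<^sub>R axis j 1) = f (y + of_int (z - 1) *\<^sub>R axis j 1 + axis j 1)"
      by (simp add: algebra_simps)
    with per step2.IH show ?case by simp
  qed simp
  have "f (x + (\<Sum>i\<in>insert j I. of_int (m i) *\<^sub>R axis i 1))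
      = f (x + (\<Sum>i\<in>I. of_int (m i) *\<^sub>R axis i 1) + of_int (m j) *\<^sub>R axis j 1)"
    using insert.hyps by (simp add: algebra_simps)
  also have "\<dots> = f (x + (\<Sum>i\<in>I. of_int (m i) *\<^sub>R axis i 1))"
    by (rule shift)
  also have "\<dots> = f x"
    by (rule insert.IH)
  finally show ?case .
qed simp_all

lemma torus_periodic_value_in_unit_cube:
  fixes f :: "real^'n::finite \<Rightarrow> 'b"
  assumes "torus_periodic f"
  obtains y where "y \<in> cbox 0 One" "f y = f x"
proof
  define m where "m i = \<lfloor>x $ i\<rfloor>" for i
  define y where "y = x - (\<Sum>i\<in>UNIV. of_int (m i) *\<^sub>R axis i (1::real))"
  have "y $ i = frac (x $ i)" for i
    by (simp add: y_def m_def frac_def axis_def if_distrib sum.delta cong: if_cong)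
  moreover have "(One::real^'n) $ i = 1" for i
    by (simp add: cart_eq_inner_axis inner_sum_left inner_Basis)
  ultimately show "y \<in> cbox 0 One"
    by (auto simp: mem_box_cart frac_lt_1 less_imp_le)
  show "f y = f x"
    using torus_periodic_integer_translate[OF assms, of y m UNIV] by (simp add: y_def)
qed

lemma torus_smooth_orthogonal_imp_zero:
  fixes h :: "real^'n::finite \<Rightarrow> real"
  assumes h: "torus_smooth_map h"
    and orth: "\<And>\<phi>. torus_smooth_map \<phi> \<Longrightarrow> integral (cbox 0 One) (\<lambda>x. h x * \<phi> x) = 0"
  shows "h x = 0"
proof -
  have cont: "continuous_on UNIV (\<lambda>x. h x * h x)"
    using h by (simp add: torus_smooth_map_def smooth_imp_continuous_on smooth_mult)
  have int0: "((\<lambda>x. h x * h x) has_integral 0) (cbox 0 One)"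
    using integrable_integral[OF continuous_on_imp_integrable_on_cbox[OF cont, of 0 One]] orth[OF h] by simp
  have zero: "h y * h y = 0" if "y \<in> cbox 0 One" for y
    using has_integral_0_cbox_imp_0[OF continuous_on_subset[OF cont subset_UNIV] _ int0 _ that]
    by (auto simp: box_ne_empty)
  obtain y where "y \<in> cbox 0 One" "h y = h x"
    using h torus_periodic_value_in_unit_cube unfolding torus_smooth_map_def by blast
  with zero show ?thesis by simp
qed

section \<open>The first variation of the action\<close>

(* case_prod theta is the 1-form theta as a function on the tangent bundle M \<times> M. *)
lemma smooth_1form_case_prod:
  assumes "smooth_1form \<theta>"
  shows "smooth (case_prod \<theta>)"
  using assms unfolding smooth_1form_def by (blast intro: smooth_linear_family)

lemma smooth_jet: "smooth W \<Longrightarrow> smooth (\<lambda>x. (W x, D W x v))"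
  by (rule smooth_Pair[OF _ smooth_D])

lemma D_1form_jet:
  fixes \<theta> :: "'m::euclidean_space \<Rightarrow> 'm \<Rightarrow> real" and Z Y :: "'a::euclidean_space \<Rightarrow> 'm"
  assumes \<theta>: "smooth_1form \<theta>" and Z: "smooth Z" and Y: "smooth Y"
  shows "D (case_prod \<theta>) (Z x, D Z x v) (Y x, D Y x v)
    = d1 \<theta> (Z x) (Y x) (D Z x v) + D (\<lambda>x. \<theta> (Z x) (Y x)) x v"
proof -
  have lin: "\<And>p. linear (\<theta> p)" and sm: "\<And>w. smooth (\<lambda>p. \<theta> p w)"
    using \<theta> by (simp_all add: smooth_1form_def)
  have "D (\<lambda>x. \<theta> (Z x) (Y x)) x v = D (case_prod \<theta>) (Z x, Y x) (D Z x v, D Y x v)"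
    using D_compose[OF smooth_Pair[OF Z Y] smooth_1form_case_prod[OF \<theta>]] D_Pair[OF Z Y] by simp
  then show ?thesis
    by (simp add: D_linear_family[OF lin sm] d1_def)
qed

lemma has_integral_d1_periodic:
  fixes \<theta> :: "'m::euclidean_space \<Rightarrow> 'm \<Rightarrow> real" and Z Y :: "'a::euclidean_space \<Rightarrow> 'm"
  assumes \<theta>: "smooth_1form \<theta>" and Z: "smooth Z" and Y: "smooth Y"
    and per: "\<And>x. Z (x + k) = Z x" "\<And>x. Y (x + k) = Y x" and k: "k \<in> Basis"
  shows "((\<lambda>x. d1 \<theta> (Z x) (Y x) (D Z x k)) has_integral
    integral (cbox 0 One) (\<lambda>x. D (case_prod \<theta>) (Z x, D Z x k) (Y x, D Y x k))) (cbox 0 One)"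
proof -
  have u: "smooth (\<lambda>x. \<theta> (Z x) (Y x))"
    using smooth_compose[OF smooth_Pair[OF Z Y] smooth_1form_case_prod[OF \<theta>]] by simp
  have "continuous_on UNIV (\<lambda>x. D (case_prod \<theta>) (Z x, D Z x k) (Y x, D Y x k))"
    using continuous_on_D[OF smooth_1form_case_prod[OF \<theta>]
        smooth_imp_continuous_on[OF smooth_jet[OF Z]] smooth_imp_continuous_on[OF smooth_jet[OF Y]]] .
  then have "(\<lambda>x. D (case_prod \<theta>) (Z x, D Z x k) (Y x, D Y x k)) integrable_on cbox 0 One"
    by (rule continuous_on_imp_integrable_on_cbox)
  moreover have "(\<lambda>x. D (\<lambda>x. \<theta> (Z x) (Y x)) x k) integrable_on cbox 0 One"
    using smooth_imp_continuous_on[OF smooth_D[OF u]] by (rule continuous_on_imp_integrable_on_cbox)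
  ultimately have "((\<lambda>x. D (case_prod \<theta>) (Z x, D Z x k) (Y x, D Y x k) - D (\<lambda>x. \<theta> (Z x) (Y x)) x k)
      has_integral integral (cbox 0 One) (\<lambda>x. D (case_prod \<theta>) (Z x, D Z x k) (Y x, D Y x k))
        - integral (cbox 0 One) (\<lambda>x. D (\<lambda>x. \<theta> (Z x) (Y x)) x k)) (cbox 0 One)"
    by (intro has_integral_diff integrable_integral)
  moreover have "\<theta> (Z (x + k)) (Y (x + k)) = \<theta> (Z x) (Y x)" for x
    using per by simp
  then have "integral (cbox 0 One) (\<lambda>x. D (\<lambda>x. \<theta> (Z x) (Y x)) x k) = 0"
    by (rule integral_unit_cube_D_periodic_eq_0[OF u _ k])
  ultimately show ?thesis
    by (simp add: D_1form_jet[OF \<theta> Z Y])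
qed

lemma action_eq_sum_integral:
  fixes \<theta> :: "'n::finite \<Rightarrow> 'm::euclidean_space \<Rightarrow> 'm \<Rightarrow> real" and W :: "real^'n \<Rightarrow> 'm"
  assumes \<theta>: "\<And>i. smooth_1form (\<theta> i)" and W: "smooth W"
  shows "action \<theta> S W = (\<Sum>i\<in>UNIV. integral (cbox 0 One) (\<lambda>x. case_prod (\<theta> i) (W x, D W x (axis i 1))))
    - integral (cbox 0 One) (\<lambda>x. S (W x))"
proof -
  have "(\<lambda>x. case_prod (\<theta> i) (W x, D W x (axis i 1))) integrable_on cbox 0 One" for i
    using smooth_imp_continuous_on[OF smooth_compose[OF smooth_jet[OF W] smooth_1form_case_prod[OF \<theta>]]]
    by (rule continuous_on_imp_integrable_on_cbox)
  then show ?thesis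
    unfolding action_def by (simp add: integral_sum)
qed

lemma has_real_derivative_action_jet:
  fixes \<theta> :: "'n::finite \<Rightarrow> 'm::euclidean_space \<Rightarrow> 'm \<Rightarrow> real" and Z Y :: "real^'n \<Rightarrow> 'm"
  assumes \<theta>: "\<And>i. smooth_1form (\<theta> i)" and S: "smooth S" and Z: "smooth Z" and Y: "smooth Y"
  shows "((\<lambda>t. action \<theta> S (\<lambda>x. Z x + t *\<^sub>R Y x)) has_real_derivative
    (\<Sum>i\<in>UNIV. integral (cbox 0 One)
        (\<lambda>x. D (case_prod (\<theta> i)) (Z x, D Z x (axis i 1)) (Y x, D Y x (axis i 1))))
    - integral (cbox 0 One) (\<lambda>x. D S (Z x) (Y x))) (at 0)"
proof -
  define jet where "jet W i x = (W x, D W x (axis i 1))" for W :: "real^'n \<Rightarrow> 'm" and i x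
  have continuous_jet: "continuous_on UNIV (jet W i)" if "smooth W" for W i
    unfolding jet_def[abs_def] using smooth_imp_continuous_on[OF smooth_jet[OF that]] .
  have "action \<theta> S (\<lambda>x. Z x + t *\<^sub>R Y x) =
      (\<Sum>i\<in>UNIV. integral (cbox 0 One) (\<lambda>x. case_prod (\<theta> i) (jet Z i x + t *\<^sub>R jet Y i x)))
      - integral (cbox 0 One) (\<lambda>x. S (Z x + t *\<^sub>R Y x))" for t
    using action_eq_sum_integral[OF \<theta> smooth_add[OF Z smooth_scaleR[OF smooth_const Y]]]
    by (simp add: jet_def D_add_scaleR[OF Z Y])
  moreover have "((\<lambda>t. integral (cbox 0 One) (\<lambda>x. case_prod (\<theta> i) (jet Z i x + t *\<^sub>R jet Y i x)))
      has_real_derivative integral (cbox 0 One) (\<lambda>x. D (case_prod (\<theta> i)) (jet Z i x) (jet Y i x))) (at 0)"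
    for i
    by (rule has_real_derivative_integral_along_line[OF smooth_1form_case_prod[OF \<theta>]
          continuous_jet[OF Z] continuous_jet[OF Y]])
  moreover have "((\<lambda>t. integral (cbox 0 One) (\<lambda>x. S (Z x + t *\<^sub>R Y x)))
      has_real_derivative integral (cbox 0 One) (\<lambda>x. D S (Z x) (Y x))) (at 0)"
    by (rule has_real_derivative_integral_along_line[OF S smooth_imp_continuous_on[OF Z]
          smooth_imp_continuous_on[OF Y]])
  ultimately have "((\<lambda>t. action \<theta> S (\<lambda>x. Z x + t *\<^sub>R Y x)) has_real_derivative
      (\<Sum>i\<in>UNIV. integral (cbox 0 One) (\<lambda>x. D (case_prod (\<theta> i)) (jet Z i x) (jet Y i x)))
      - integral (cbox 0 One) (\<lambda>x. D S (Z x) (Y x))) (at 0)"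
    by (simp only: DERIV_diff DERIV_sum)
  then show ?thesis
    by (simp only: jet_def)
qed

definition euler_lagrange ::
    "('n::finite \<Rightarrow> 'm::euclidean_space \<Rightarrow> 'm \<Rightarrow> 'm \<Rightarrow> real) \<Rightarrow> ('m \<Rightarrow> real) \<Rightarrow> (real^'n \<Rightarrow> 'm)
      \<Rightarrow> real^'n \<Rightarrow> 'm \<Rightarrow> real" where
  "euler_lagrange \<omega> S Z x V = (\<Sum>i\<in>UNIV. \<omega> i (Z x) V (D Z x (axis i 1))) - D S (Z x) V"

lemma has_integral_euler_lagrange:
  fixes \<theta> :: "'n::finite \<Rightarrow> 'm::euclidean_space \<Rightarrow> 'm \<Rightarrow> real" and Z Y :: "real^'n \<Rightarrow> 'm"
  assumes \<theta>: "\<And>i. smooth_1form (\<theta> i)" and d\<theta>: "\<And>i. d1 (\<theta> i) = \<omega> i" and S: "smooth S"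
    and Z: "torus_smooth_map Z" and Y: "torus_smooth_map Y"
  shows "((\<lambda>x. euler_lagrange \<omega> S Z x (Y x)) has_integral
    (\<Sum>i\<in>UNIV. integral (cbox 0 One)
        (\<lambda>x. D (case_prod (\<theta> i)) (Z x, D Z x (axis i 1)) (Y x, D Y x (axis i 1))))
    - integral (cbox 0 One) (\<lambda>x. D S (Z x) (Y x))) (cbox 0 One)"
proof -
  have Zs: "smooth Z" and Ys: "smooth Y"
    using Z Y by (simp_all add: torus_smooth_map_def)
  have per: "Z (x + axis i 1) = Z x" "Y (x + axis i 1) = Y x" for x i
    using Z Y by (simp_all add: torus_smooth_map_def torus_periodic_def)
  have "((\<lambda>x. d1 (\<theta> i) (Z x) (Y x) (D Z x (axis i 1))) has_integral integral (cbox 0 One)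
      (\<lambda>x. D (case_prod (\<theta> i)) (Z x, D Z x (axis i 1)) (Y x, D Y x (axis i 1)))) (cbox 0 One)" for i
    by (rule has_integral_d1_periodic[OF \<theta> Zs Ys per(1)[of _ i] per(2)[of _ i]]) simp
  then have "((\<lambda>x. \<Sum>i\<in>UNIV. \<omega> i (Z x) (Y x) (D Z x (axis i 1))) has_integral
      (\<Sum>i\<in>UNIV. integral (cbox 0 One)
        (\<lambda>x. D (case_prod (\<theta> i)) (Z x, D Z x (axis i 1)) (Y x, D Y x (axis i 1))))) (cbox 0 One)"
    unfolding d\<theta> by (rule has_integral_sum[rotated]) simp
  moreover have "((\<lambda>x. D S (Z x) (Y x)) has_integral integral (cbox 0 One) (\<lambda>x. D S (Z x) (Y x))) (cbox 0 One)"
    using continuous_on_D[OF S smooth_imp_continuous_on[OF Zs] smooth_imp_continuous_on[OF Ys]]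
    by (intro integrable_integral continuous_on_imp_integrable_on_cbox)
  ultimately show ?thesis
    unfolding euler_lagrange_def by (rule has_integral_diff)
qed

lemma has_real_derivative_action:
  fixes \<theta> :: "'n::finite \<Rightarrow> 'm::euclidean_space \<Rightarrow> 'm \<Rightarrow> real" and Z Y :: "real^'n \<Rightarrow> 'm"
  assumes \<theta>: "\<And>i. smooth_1form (\<theta> i)" and d\<theta>: "\<And>i. d1 (\<theta> i) = \<omega> i" and S: "smooth S"
    and Z: "torus_smooth_map Z" and Y: "torus_smooth_map Y"
  shows "((\<lambda>t. action \<theta> S (\<lambda>x. Z x + t *\<^sub>R Y x)) has_real_derivative
    integral (cbox 0 One) (\<lambda>x. euler_lagrange \<omega> S Z x (Y x))) (at 0)"
proof -
  have "smooth Z" "smooth Y"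
    using Z Y by (simp_all add: torus_smooth_map_def)
  from has_real_derivative_action_jet[where \<theta>=\<theta>, OF \<theta> S this]
    has_integral_euler_lagrange[where \<theta>=\<theta>, OF \<theta> d\<theta> S Z Y]
  show ?thesis
    by (simp add: integral_unique)
qed

lemma linear_euler_lagrange:
  assumes "\<And>i. smooth_2form (\<omega> i)" and "smooth S"
  shows "linear (euler_lagrange \<omega> S Z x)"
proof -
  have "linear (\<lambda>V. \<omega> i p V W)" for i p W
    using assms(1)[of i] unfolding smooth_2form_def bilinear_def by blast
  then have "linear (\<lambda>V. \<Sum>i\<in>UNIV. \<omega> i (Z x) V (D Z x (axis i 1)))"
    by (simp add: linear_compose_sum)
  from linear_compose_sub[OF this linear_D[OF assms(2)]] show ?thesis
    by (simp add: euler_lagrange_def[abs_def])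
qed

lemma torus_smooth_map_euler_lagrange:
  assumes \<omega>: "\<And>i. smooth_2form (\<omega> i)" and S: "smooth S" and Z: "torus_smooth_map Z"
  shows "torus_smooth_map (\<lambda>x. euler_lagrange \<omega> S Z x V)"
proof -
  have Zs: "smooth Z" and Zp: "torus_periodic Z"
    using Z by (simp_all add: torus_smooth_map_def)
  have "linear (\<omega> i p V)" "smooth (\<lambda>p. \<omega> i p V W)" for i p W
    using \<omega>[of i] unfolding smooth_2form_def bilinear_def by blast+
  then have "smooth (\<lambda>x. \<omega> i (Z x) V (D Z x (axis i 1)))" for i
    using smooth_compose[OF smooth_jet[OF Zs] smooth_linear_family[of "\<lambda>p. \<omega> i p V"]] by simp
  from smooth_diff[OF smooth_sum[OF this] smooth_compose[OF Zs smooth_D[OF S]]]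
  have "smooth (\<lambda>x. euler_lagrange \<omega> S Z x V)"
    by (simp add: euler_lagrange_def)
  moreover have "torus_periodic (\<lambda>x. euler_lagrange \<omega> S Z x V)"
    using Zp torus_periodic_D[OF Zs Zp] by (simp add: torus_periodic_def euler_lagrange_def)
  ultimately show ?thesis
    by (simp add: torus_smooth_map_def)
qed

lemma critical_point_action_iff:
  fixes \<theta> :: "'n::finite \<Rightarrow> 'm::euclidean_space \<Rightarrow> 'm \<Rightarrow> real" and Z :: "real^'n \<Rightarrow> 'm"
  assumes \<theta>: "\<And>i. smooth_1form (\<theta> i)" and d\<theta>: "\<And>i. d1 (\<theta> i) = \<omega> i"
    and \<omega>: "\<And>i. smooth_2form (\<omega> i)" and S: "smooth S" and Z: "torus_smooth_map Z"
  shows "critical_point (action \<theta> S) Z \<longleftrightarrow> (\<forall>x V. euler_lagrange \<omega> S Z x V = 0)"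
proof
  assume crit: "critical_point (action \<theta> S) Z"
  show "\<forall>x V. euler_lagrange \<omega> S Z x V = 0"
  proof (intro allI)
    fix x V
    show "euler_lagrange \<omega> S Z x V = 0"
    proof (rule torus_smooth_orthogonal_imp_zero[OF torus_smooth_map_euler_lagrange[OF \<omega> S Z]])
      fix \<phi> :: "real^'n \<Rightarrow> real"
      assume "torus_smooth_map \<phi>"
      then have Y: "torus_smooth_map (\<lambda>x. \<phi> x *\<^sub>R V)"
        by (simp add: torus_smooth_map_def torus_periodic_def smooth_scaleR smooth_const)
      have "((\<lambda>t. action \<theta> S (\<lambda>x. Z x + t *\<^sub>R (\<phi> x *\<^sub>R V))) has_real_derivative 0) (at 0)"
        using crit Y unfolding critical_point_def by blast
      from DERIV_unique[OF has_real_derivative_action[where \<theta>=\<theta>, OF \<theta> d\<theta> S Z Y] this]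
      show "integral (cbox 0 One) (\<lambda>x. euler_lagrange \<omega> S Z x V * \<phi> x) = 0"
        by (simp add: linear_scale[OF linear_euler_lagrange[OF \<omega> S]] mult.commute)
    qed
  qed
next
  assume "\<forall>x V. euler_lagrange \<omega> S Z x V = 0"
  then show "critical_point (action \<theta> S) Z"
    using has_real_derivative_action[where \<theta>=\<theta>, OF \<theta> d\<theta> S Z] by (simp add: critical_point_def)
qed

lemma Omega_sharp_Omega_of:
  "Omega_sharp (Omega_of \<omega> p) X V = (\<Sum>i\<in>UNIV. \<omega> i p V (X (axis i 1)))"
  by (simp add: Omega_sharp_def trace_def matrix_def Omega_of_def)

theorem lemma4p8:
  fixes \<omega> :: "'n::finite \<Rightarrow> 'm::euclidean_space \<Rightarrow> 'm \<Rightarrow> 'm \<Rightarrow> real"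
    and \<theta> :: "'n \<Rightarrow> 'm \<Rightarrow> 'm \<Rightarrow> real"
    and S :: "'m \<Rightarrow> real"
    and Z :: "real^'n \<Rightarrow> 'm"
  assumes "polysymplectic \<omega>"
    and "\<And>i. smooth_1form (\<theta> i)"
    and "\<And>i. d1 (\<theta> i) = \<omega> i"
    and "smooth S"
    and "torus_smooth_map Z"
  shows "critical_point (action \<theta> S) Z \<longleftrightarrow>
         (\<forall>x. D S (Z x) = Omega_sharp (Omega_of \<omega> (Z x)) (D Z x))"
proof -
  have "smooth_2form (\<omega> i)" for i
    using assms(1) unfolding polysymplectic_def closed_2form_def by blast
  note iff = critical_point_action_iff[where \<theta>=\<theta>, OF assms(2,3) this assms(4,5)]
  have pointwise: "D S (Z x) = Omega_sharp (Omega_of \<omega> (Z x)) (D Z x) \<longleftrightarrow> (\<forall>V. euler_lagrange \<omega> S Z x V = 0)"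
    for x
    unfolding fun_eq_iff Omega_sharp_Omega_of euler_lagrange_def by auto
  show ?thesis
    by (simp only: iff pointwise)
qed

end
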